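(* For each $i\in\{1,\dots,13\}$ and each $n$ for which the graph $G_i$ (defined in the context) is defined, $q(G_i)<q(K_{1,1,n-2}^+)$.
   Context: $q(G)$ denotes the largest eigenvalue of the signless Laplacian matrix $Q(G)=D(G)+A(G)$ ($A(G)$ adjacency matrix, $D(G)$ diagonal degree matrix). $K_{1,1,n-2}^+$ is obtained from the complete tripartite graph $K_{1,1,n-2}$ by adding one edge inside the part of size $n-2$. $K_4$ is the complete graph on 4 vertices. Define graphs $U_1,\dots,U_{12}$, each with two distinguished vertices $z,w$: - $U_1$: a 4-cycle $abcda$, plus $z$ and $w$ each adjacent to $a,b,c,d$ (6 vertices). - $U_2$: a 4-cycle $abcda$ plus the chord $ac$, plus $z$ adjacent to $a,b,c,d$ and $w$ adjacent to $b,d$ (6 vertices). - $U_3$ (resp. $U_4$): $U_1$ (resp. $U_2$) plus one new vertex adjacent only to $z$ (7 vertices). - $U_5$ (resp. $U_6$): $U_1$ (resp. $U_2$) plus a new triangle whose three vertices are all adjacent to $z$ (9 vertices). - $U_7$: a $K_4$ on $\{p,q,r,w\}$, a triangle $\{t_1,t_2,t_3\}$, and $z$ adjacent to $p,q,r,t_1,t_2,t_3$ (8 vertices). - $U_8$: a $K_4$ on $\{A,B,C,w\}$, a vertex $D$ adjacent to $w$, and $z$ adjacent to $A,B,C,D$ (6 vertices). - $U_9$: a triangle $acd$ plus a vertex $b$ adjacent to $d$, plus $z$ adjacent to $a,b,c,d$ and $w$ adjacent to $a,b,c$ (6 vertices). - $U_{10}$ (resp. $U_{11}$): $U_9$ plus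 one (resp. two) new vertices each adjacent exactly to $d$ and $z$ (7, resp. 8 vertices). - $U_{12}=U_{12}(n,s)$, $s\ge3$: a star $K_{1,s}$ with center $c$ and leaves $\ell_1,\dots,\ell_s$, plus $z$ adjacent to $c,\ell_1,\dots,\ell_s$ and $w$ adjacent to $\ell_1,\dots,\ell_s$ ($s+3$ vertices). For $i=1,\dots,11$, with $n\ge 7$ and $n-|V(U_i)|\equiv 0\pmod 4$, $G_i$ is the $n$-vertex graph obtained from $U_i$ together with $\frac{n-|V(U_i)|}{4}$ vertex-disjoint new copies of $K_4$ by adding all edges between $z$ and the vertices of these copies. $G_{12}=G_{12}(n,s)$ is obtained in the same way from $U_{12}(n,s)$ with $\frac{n-s-3}{4}$ copies of $K_4$, where $s\ge 3$, $n\ge s+7$ and $n-s-3\equiv 0\pmod 4$. $G_{13}$ is obtained from the complete bipartite graph $K_{3,n-3}$ by adding one edge inside the part of size $3$, where $n\ge 7$. *)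

theory Defs
  imports "Jordan_Normal_Form.Char_Poly"
begin

text \<open>A simple graph on the vertex set {0..<n} is given by an adjacency predicate
  E :: nat => nat => bool (assumed symmetric and irreflexive on {0..<n};
  all graphs below are built that way).\<close>

definition degree :: "nat \<Rightarrow> (nat \<Rightarrow> nat \<Rightarrow> bool) \<Rightarrow> nat \<Rightarrow> nat" where
  "degree n E i = card {j \<in> {0..<n}. E i j}"

definition signless_laplacian :: "nat \<Rightarrow> (nat \<Rightarrow> nat \<Rightarrow> bool) \<Rightarrow> real mat" where
  "signless_laplacian n E = mat n n (\<lambda>(i, j).
     (if i = j then real (degree n E i) else 0) + (if E i j then 1 else 0))"

definition q_index :: "nat \<Rightarrow> (nat \<Rightarrow> nat \<Rightarrow> bool) \<Rightarrow> real" where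
  "q_index n E = Max {\<mu>. eigenvalue (signless_laplacian n E) \<mu>}"

definition from_edges :: "(nat \<times> nat) list \<Rightarrow> nat \<Rightarrow> nat \<Rightarrow> bool" where
  "from_edges es i j = ((i, j) \<in> set es \<or> (j, i) \<in> set es)"

text \<open>Attach m vertex-disjoint copies of K4 on vertices k..k+4m-1
  (copy t is {k+4t,...,k+4t+3}) to a base graph B on {0..<k}, joining
  the distinguished vertex z = 0 to all of them.\<close>
definition attach_K4 :: "nat \<Rightarrow> nat \<Rightarrow> (nat \<Rightarrow> nat \<Rightarrow> bool) \<Rightarrow> nat \<Rightarrow> nat \<Rightarrow> bool" where
  "attach_K4 k m B i j =
     (B i j
      \<or> (i = 0 \<and> k \<le> j \<and> j < k + 4 * m)
      \<or> (j = 0 \<and> k \<le> i \<and> i < k + 4 * m)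
      \<or> (k \<le> i \<and> k \<le> j \<and> i < k + 4 * m \<and> j < k + 4 * m \<and> i \<noteq> j
          \<and> (i - k) div 4 = (j - k) div 4))"

text \<open>Vertex labels: z = 0, w = 1.\<close>
definition U1_edges :: "(nat \<times> nat) list" where   \<comment> \<open>a=2,b=3,c=4,d=5\<close>
  "U1_edges = [(2,3),(3,4),(4,5),(5,2),
               (0,2),(0,3),(0,4),(0,5),(1,2),(1,3),(1,4),(1,5)]"

definition U2_edges :: "(nat \<times> nat) list" where   \<comment> \<open>a=2,b=3,c=4,d=5\<close>
  "U2_edges = [(2,3),(3,4),(4,5),(5,2),(2,4),
               (0,2),(0,3),(0,4),(0,5),(1,3),(1,5)]"

definition U7_edges :: "(nat \<times> nat) list" where   \<comment> \<open>p=2,q=3,r=4; triangle 5,6,7\<close>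
  "U7_edges = [(2,3),(2,4),(2,1),(3,4),(3,1),(4,1),
               (5,6),(6,7),(5,7),
               (0,2),(0,3),(0,4),(0,5),(0,6),(0,7)]"

definition U8_edges :: "(nat \<times> nat) list" where   \<comment> \<open>A=2,B=3,C=4,D=5\<close>
  "U8_edges = [(2,3),(2,4),(2,1),(3,4),(3,1),(4,1),(5,1),
               (0,2),(0,3),(0,4),(0,5)]"

definition U9_edges :: "(nat \<times> nat) list" where   \<comment> \<open>a=2,b=3,c=4,d=5\<close>
  "U9_edges = [(2,4),(4,5),(2,5),(3,5),
               (0,2),(0,3),(0,4),(0,5),(1,2),(1,3),(1,4)]"

definition U_edges :: "nat \<Rightarrow> (nat \<times> nat) list" where
  "U_edges i =
    (if i = 1 then U1_edges
     else if i = 2 then U2_edges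
     else if i = 3 then U1_edges @ [(6,0)]
     else if i = 4 then U2_edges @ [(6,0)]
     else if i = 5 then U1_edges @ [(6,7),(7,8),(6,8),(0,6),(0,7),(0,8)]
     else if i = 6 then U2_edges @ [(6,7),(7,8),(6,8),(0,6),(0,7),(0,8)]
     else if i = 7 then U7_edges
     else if i = 8 then U8_edges
     else if i = 9 then U9_edges
     else if i = 10 then U9_edges @ [(6,5),(6,0)]
     else U9_edges @ [(6,5),(6,0),(7,5),(7,0)])"

definition U_size :: "nat \<Rightarrow> nat" where
  "U_size i = (if i \<in> {1,2,8,9} then 6 else if i \<in> {3,4,10} then 7
               else if i \<in> {7,11} then 8 else 9)"

definition G_graph :: "nat \<Rightarrow> nat \<Rightarrow> nat \<Rightarrow> nat \<Rightarrow> bool" where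
  "G_graph i n = attach_K4 (U_size i) ((n - U_size i) div 4) (from_edges (U_edges i))"

text \<open>U12(s): centre c = 2, leaves 3..s+2.\<close>
definition U12 :: "nat \<Rightarrow> nat \<Rightarrow> nat \<Rightarrow> bool" where
  "U12 s i j = (let leaf = (\<lambda>x. 3 \<le> x \<and> x \<le> s + 2);
                    e = (\<lambda>x y. (x = 2 \<and> leaf y) \<or> (x = 0 \<and> (y = 2 \<or> leaf y)) \<or> (x = 1 \<and> leaf y))
                in e i j \<or> e j i)"

definition G12 :: "nat \<Rightarrow> nat \<Rightarrow> nat \<Rightarrow> nat \<Rightarrow> bool" where
  "G12 n s = attach_K4 (s + 3) ((n - s - 3) div 4) (U12 s)"

definition G13 :: "nat \<Rightarrow> nat \<Rightarrow> nat \<Rightarrow> bool" where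
  "G13 n i j = ((i < 3 \<and> 3 \<le> j \<and> j < n) \<or> (j < 3 \<and> 3 \<le> i \<and> i < n)
                \<or> (i = 0 \<and> j = 1) \<or> (i = 1 \<and> j = 0))"

definition K11_plus :: "nat \<Rightarrow> nat \<Rightarrow> nat \<Rightarrow> bool" where
  "K11_plus n i j = (i < n \<and> j < n \<and> i \<noteq> j \<and>
                      (i \<le> 1 \<or> j \<le> 1 \<or> {i, j} = {2, 3}))"

end

theory Submission
  imports Defs
begin

text \<open>
  If x > 0 and Q x \<le> M x coordinatewise, then every
  eigenvalue of Q is at most M (Collatz--Wielandt). For each of G_1, ..., G_13 an explicit positive
  weighting gives Q x \<le> (n + 8/5) x; on the attached copies of K_4 the weight is always
  t = 1/(n - 27/5), so only the rows of the base graph U_i need checking.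
  Each of these graphs has two twin vertices u, v, so e_u - e_v is an eigenvector and the maximum
  defining q is taken over a nonempty set. On the other side, the signless Laplacian of
  K_{1,1,n-2}^+ has an eigenvector that is constant on the parts {0,1}, {2,3}, {4,...,n-1};
  its eigenvalue is a root of a cubic, located by the intermediate value theorem above n + 17/10.
\<close>

definition signless_mult :: "nat \<Rightarrow> (nat \<Rightarrow> nat \<Rightarrow> bool) \<Rightarrow> (nat \<Rightarrow> real) \<Rightarrow> nat \<Rightarrow> real" where
  "signless_mult n E x i = (\<Sum>j<n. if E i j then x i + x j else 0)"

lemma signless_mult_cong:
  "(\<And>j. j < n \<Longrightarrow> x j = y j) \<Longrightarrow> i < n \<Longrightarrow> signless_mult n E x i = signless_mult n E y i"
  unfolding signless_mult_def by (intro sum.cong) auto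

lemma signless_laplacian_carrier: "signless_laplacian n E \<in> carrier_mat n n"
  unfolding signless_laplacian_def by simp

lemma dim_row_signless_laplacian [simp]: "dim_row (signless_laplacian n E) = n"
  unfolding signless_laplacian_def by simp

lemma signless_laplacian_mult_vec_nth:
  assumes "i < n" "dim_vec v = n"
  shows "(signless_laplacian n E *\<^sub>v v) $ i = signless_mult n E (\<lambda>j. v $ j) i"
proof -
  have deg: "real (degree n E i) = (\<Sum>j<n. if E i j then 1 else 0)"
    unfolding degree_def atLeast0LessThan by (simp flip: sum.inter_filter)
  have "(signless_laplacian n E *\<^sub>v v) $ i =
      (\<Sum>j<n. ((if i = j then real (degree n E i) else 0) + (if E i j then 1 else 0)) * v $ j)"
    using assms unfolding signless_laplacian_def by (simp add: scalar_prod_def lessThan_atLeast0)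
  also have "\<dots> = (\<Sum>j<n. if i = j then real (degree n E i) * v $ j else 0)
      + (\<Sum>j<n. if E i j then v $ j else 0)"
    by (subst sum.distrib[symmetric], rule sum.cong) (auto simp: distrib_right)
  also have "\<dots> = real (degree n E i) * v $ i + (\<Sum>j<n. if E i j then v $ j else 0)"
    using assms by (simp add: sum.delta)
  finally show ?thesis
    unfolding signless_mult_def deg
    by (simp add: sum_distrib_right sum.distrib[symmetric] if_distrib cong: if_cong)
qed

lemma finite_eigenvalues_signless_laplacian: "finite {\<mu>. eigenvalue (signless_laplacian n E) \<mu>}"
proof -
  let ?A = "signless_laplacian n E"
  have "coeff (char_poly ?A) n = 1"
    using degree_monic_char_poly[OF signless_laplacian_carrier] by simp
  then have "char_poly ?A \<noteq> 0" by auto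
  then have "finite {\<mu>. poly (char_poly ?A) \<mu> = 0}" by (rule poly_roots_finite)
  then show ?thesis using eigenvalue_root_char_poly[OF signless_laplacian_carrier] by simp
qed

lemma eigenvalue_le_q_index: "eigenvalue (signless_laplacian n E) \<mu> \<Longrightarrow> \<mu> \<le> q_index n E"
  unfolding q_index_def using finite_eigenvalues_signless_laplacian by (intro Max_ge) auto

lemma q_index_le:
  assumes "eigenvalue (signless_laplacian n E) \<nu>"
    and "\<And>\<mu>. eigenvalue (signless_laplacian n E) \<mu> \<Longrightarrow> \<mu> \<le> M"
  shows "q_index n E \<le> M"
  unfolding q_index_def using assms finite_eigenvalues_signless_laplacian
  by (intro Max.boundedI) auto

lemma signless_laplacian_eigenvalueI:
  assumes "j0 < n" "f j0 \<noteq> 0" and row: "\<And>i. i < n \<Longrightarrow> signless_mult n E f i = \<mu> * f i"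
  shows "eigenvalue (signless_laplacian n E) \<mu>"
proof -
  have "signless_laplacian n E *\<^sub>v vec n f = \<mu> \<cdot>\<^sub>v vec n f"
  proof (rule eq_vecI)
    fix i assume "i < dim_vec (\<mu> \<cdot>\<^sub>v vec n f)"
    then have "i < n" by simp
    then show "(signless_laplacian n E *\<^sub>v vec n f) $ i = (\<mu> \<cdot>\<^sub>v vec n f) $ i"
      using row[of i] signless_laplacian_mult_vec_nth[of i n "vec n f" E]
        signless_mult_cong[of n "\<lambda>j. vec n f $ j" f i E] by simp
  qed simp
  moreover have "vec n f \<noteq> 0\<^sub>v n"
  proof
    assume "vec n f = 0\<^sub>v n"
    then have "vec n f $ j0 = 0" using assms(1) by simp
    then show False using assms(1,2) by simp
  qed
  ultimately show ?thesis
    unfolding eigenvalue_def eigenvector_def dim_row_signless_laplacian by (blast intro: vec_carrier)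
qed

lemma eigenvalue_le_if_signless_mult_le:
  assumes pos: "\<And>i. i < n \<Longrightarrow> x i > 0"
    and le: "\<And>i. i < n \<Longrightarrow> signless_mult n E x i \<le> M * x i"
    and ev: "eigenvalue (signless_laplacian n E) \<mu>"
  shows "\<mu> \<le> M"
proof -
  obtain v where carrier: "v \<in> carrier_vec n"
    and v: "v \<noteq> 0\<^sub>v n" "signless_laplacian n E *\<^sub>v v = \<mu> \<cdot>\<^sub>v v"
    using ev unfolding eigenvalue_def eigenvector_def dim_row_signless_laplacian by blast
  have dim: "dim_vec v = n" using carrier by (rule carrier_vecD)
  obtain j0 where j0: "j0 < n" "v $ j0 \<noteq> 0"
    using dim v(1) by (metis eq_vecI index_zero_vec)
  txt \<open>Compare the two sides at a coordinate k where |v_k| / x_k is maximal.\<close>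
  define r where "r j = \<bar>v $ j\<bar> / x j" for j
  have "Max (r ` {..<n}) \<in> r ` {..<n}" using j0(1) by (intro Max_in) auto
  then obtain k where k: "k < n" "r k = Max (r ` {..<n})" by auto
  then have r_max: "r j \<le> r k" if "j < n" for j using that by simp
  have "r j0 > 0" using j0 pos[OF j0(1)] by (simp add: r_def)
  then have "r k > 0" using r_max[OF j0(1)] by linarith
  have vk: "\<bar>v $ k\<bar> = r k * x k" using pos[OF k(1)] by (simp add: r_def)
  have vj: "\<bar>v $ j\<bar> \<le> r k * x j" if "j < n" for j
    using r_max[OF that] pos[OF that] by (simp add: r_def divide_le_eq)
  have "\<mu> * v $ k = signless_mult n E (\<lambda>j. v $ j) k"
    using v(2) k(1) dim signless_laplacian_mult_vec_nth[OF k(1) dim, of E] by simp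
  then have "\<bar>\<mu>\<bar> * \<bar>v $ k\<bar> = \<bar>\<Sum>j<n. if E k j then v $ k + v $ j else 0\<bar>"
    unfolding signless_mult_def by (simp add: abs_mult[symmetric])
  also have "\<dots> \<le> (\<Sum>j<n. \<bar>if E k j then v $ k + v $ j else 0\<bar>)" by (rule sum_abs)
  also have "\<dots> \<le> (\<Sum>j<n. if E k j then \<bar>v $ k\<bar> + \<bar>v $ j\<bar> else 0)"
    by (intro sum_mono) auto
  also have "\<dots> \<le> (\<Sum>j<n. if E k j then r k * x k + r k * x j else 0)"
    by (intro sum_mono) (auto simp: vk intro: vj)
  also have "\<dots> = r k * signless_mult n E x k"
    unfolding signless_mult_def by (simp add: sum_distrib_left distrib_left if_distrib cong: if_cong)
  also have "\<dots> \<le> r k * (M * x k)" using le[OF k(1)] \<open>r k > 0\<close> by simp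
  also have "\<dots> = M * \<bar>v $ k\<bar>" using vk by simp
  finally have "\<bar>\<mu>\<bar> * \<bar>v $ k\<bar> \<le> M * \<bar>v $ k\<bar>" .
  moreover have "\<bar>v $ k\<bar> > 0" using vk \<open>r k > 0\<close> pos[OF k(1)] by simp
  ultimately have "\<bar>\<mu>\<bar> \<le> M" by (rule mult_right_le_imp_le)
  then show ?thesis by linarith
qed

definition twins :: "(nat \<Rightarrow> nat \<Rightarrow> bool) \<Rightarrow> nat \<Rightarrow> nat \<Rightarrow> bool" where
  "twins E u v \<longleftrightarrow> u \<noteq> v \<and> \<not> E u u \<and> \<not> E v v
     \<and> (\<forall>w. w \<noteq> u \<longrightarrow> w \<noteq> v \<longrightarrow> E u w = E v w \<and> E w u = E w v)"

lemma twins_eigenvalue: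
  assumes "twins E u v" and u: "u < n" and v: "v < n"
  shows "\<exists>\<mu>. eigenvalue (signless_laplacian n E) \<mu>"
proof -
  have uv: "u \<noteq> v" and "\<not> E u u" "\<not> E v v"
    and twins: "\<And>w. w \<noteq> u \<Longrightarrow> w \<noteq> v \<Longrightarrow> E u w = E v w \<and> E w u = E w v"
    using assms(1) unfolding twins_def by auto
  define f :: "nat \<Rightarrow> real" where "f j = (if j = u then 1 else if j = v then -1 else 0)" for j
  define d where "d i = (\<Sum>j\<in>{..<n} - {u, v}. if E i j then 1 else 0 :: real)" for i
  have "d v = d u" unfolding d_def using twins by (intro sum.cong) auto
  have "signless_mult n E f i = d u * f i" if "i < n" for i
  proof -
    have "signless_mult n E f i = (\<Sum>j\<in>{..<n} - {u, v}. if E i j then f i + f j else 0)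
        + (\<Sum>j\<in>{u, v}. if E i j then f i + f j else 0)"
      unfolding signless_mult_def by (rule sum.subset_diff) (use u v in auto)
    also have "(\<Sum>j\<in>{..<n} - {u, v}. if E i j then f i + f j else 0) = d i * f i"
      unfolding d_def sum_distrib_right by (intro sum.cong) (auto simp: f_def)
    also have "(\<Sum>j\<in>{u, v}. if E i j then f i + f j else 0)
        = (if E i u then f i + 1 else 0) + (if E i v then f i - 1 else 0)"
      using uv by (simp add: f_def)
    finally have "signless_mult n E f i
        = d i * f i + ((if E i u then f i + 1 else 0) + (if E i v then f i - 1 else 0))" .
    moreover have "f u = 1" "f v = -1" "i \<noteq> u \<Longrightarrow> i \<noteq> v \<Longrightarrow> f i = 0"
      using uv by (simp_all add: f_def)
    ultimately show ?thesis
      using twins[of i] \<open>d v = d u\<close> \<open>\<not> E u u\<close> \<open>\<not> E v v\<close> by (cases "i = u"; cases "i = v") auto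
  qed
  then have "eigenvalue (signless_laplacian n E) (d u)"
    using u uv by (intro signless_laplacian_eigenvalueI[of u n f]) (simp_all add: f_def)
  then show ?thesis ..
qed

lemma sum_lessThan_split:
  fixes k n :: nat
  assumes "k \<le> n"
  shows "(\<Sum>j<n. f j) = (\<Sum>j<k. f j) + (\<Sum>j\<in>{k..<n}. f j)"
proof -
  have "sum f ({..<k} \<union> {k..<n}) = sum f {..<k} + sum f {k..<n}" by (rule sum.union_disjoint) auto
  then show ?thesis using ivl_disj_un_one(2)[OF assms] by simp
qed

lemma K11_plus_cubic_root:
  assumes "7 \<le> n"
  obtains \<mu> :: real where "n + 17/10 \<le> \<mu>"
    and "(\<mu> - n) * (\<mu> - 4) * (\<mu> - 2) = 4 * (\<mu> - 2) + 2 * (real n - 4) * (\<mu> - 4)"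
proof -
  define P where "P m = (m - n) * (m - 4) * (m - 2) - 4 * (m - 2) - 2 * (real n - 4) * (m - 4)" for m :: real
  have n: "7 \<le> real n" using assms by simp
  have "P (n + 17/10) = - 3/10 * (real n - 7)\<^sup>2 - 2/100 * n - 1327/1000"
    unfolding P_def by (simp add: field_simps power2_eq_square)
  then have lower: "P (n + 17/10) \<le> 0" using zero_le_power2[of "real n - 7"] n by linarith
  have "P (n + 3) = real n * real n + 6 * n - 15"
    unfolding P_def by (simp add: algebra_simps)
  moreover have "7 * 7 \<le> real n * real n" using n by (intro mult_mono) auto
  ultimately have upper: "0 \<le> P (n + 3)" by linarith
  have "isCont P m" for m unfolding P_def by (intro continuous_intros)
  then obtain \<mu> where "n + 17/10 \<le> \<mu>" "P \<mu> = 0"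
    using IVT[of P "n + 17/10" 0 "n + 3"] lower upper by auto
  then show ?thesis using that unfolding P_def by simp
qed

text \<open>The eigenvector takes the values 1, b, c on the parts {0,1}, {2,3}, {4,...,n-1}; its rows
  force b = 2/(\<mu> - 4), c = 2/(\<mu> - 2) and \<mu> = n + 2b + (n - 4)c, which is the cubic.\<close>
lemma K11_plus_eigenvalue:
  assumes n: "4 \<le> n" and "4 < \<mu>"
    and cubic: "(\<mu> - n) * (\<mu> - 4) * (\<mu> - 2) = 4 * (\<mu> - 2) + 2 * (real n - 4) * (\<mu> - 4)"
  shows "eigenvalue (signless_laplacian n (K11_plus n)) \<mu>"
proof (rule signless_laplacian_eigenvalueI)
  define b where "b = 2 / (\<mu> - 4)"
  define c where "c = 2 / (\<mu> - 2)"
  define f :: "nat \<Rightarrow> real" where "f j = (if j < 2 then 1 else if j < 4 then b else c)" for j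
  have b: "b * (\<mu> - 4) = 2" and c: "c * (\<mu> - 2) = 2"
    using \<open>4 < \<mu>\<close> by (simp_all add: b_def c_def field_simps)
  have "(\<mu> - n - 2 * b - (real n - 4) * c) * ((\<mu> - 4) * (\<mu> - 2))
      = (\<mu> - n) * (\<mu> - 4) * (\<mu> - 2) - 2 * (b * (\<mu> - 4)) * (\<mu> - 2)
        - (real n - 4) * (c * (\<mu> - 2)) * (\<mu> - 4)"
    by (simp add: algebra_simps)
  also have "\<dots> = 0" unfolding b c cubic by simp
  finally have \<mu>: "\<mu> = n + 2 * b + (real n - 4) * c" using \<open>4 < \<mu>\<close> by simp
  show "0 < n" "f 0 \<noteq> 0" using n by (simp_all add: f_def)
  fix i assume i: "i < n"
  have "signless_mult n (K11_plus n) f i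
      = (\<Sum>j<4. if K11_plus n i j then f i + f j else 0)
        + (\<Sum>j\<in>{4..<n}. if K11_plus n i j then f i + f j else 0)"
    unfolding signless_mult_def using n by (rule sum_lessThan_split)
  also have "(\<Sum>j\<in>{4..<n}. if K11_plus n i j then f i + f j else 0)
      = (if i \<le> 1 then (real n - 4) * (1 + c) else 0)"
    using i n by (auto simp: K11_plus_def f_def of_nat_diff doubleton_eq_iff intro!: sum.neutral)
  finally have row: "signless_mult n (K11_plus n) f i
      = (\<Sum>j<4. if K11_plus n i j then f i + f j else 0)
        + (if i \<le> 1 then (real n - 4) * (1 + c) else 0)" .
  consider "i \<le> 1" | "i = 2" | "i = 3" | "4 \<le> i" by linarith
  then show "signless_mult n (K11_plus n) f i = \<mu> * f i"
  proof cases
    case 1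
    then show ?thesis unfolding row using n
      by (auto simp: lessThan_nat_numeral K11_plus_def f_def \<mu> algebra_simps)
  next
    case 2
    then show ?thesis unfolding row using n b
      by (simp add: lessThan_nat_numeral K11_plus_def f_def algebra_simps)
  next
    case 3
    then show ?thesis unfolding row using n b
      by (simp add: lessThan_nat_numeral K11_plus_def f_def algebra_simps insert_commute)
  next
    case 4
    then show ?thesis unfolding row using i c
      by (auto simp: lessThan_nat_numeral K11_plus_def f_def algebra_simps doubleton_eq_iff)
  qed
qed

lemma K11_plus_q_index_ge:
  assumes "7 \<le> n"
  shows "n + 17/10 \<le> q_index n (K11_plus n)"
proof -
  obtain \<mu> :: real where "n + 17/10 \<le> \<mu>"
    and "(\<mu> - n) * (\<mu> - 4) * (\<mu> - 2) = 4 * (\<mu> - 2) + 2 * (real n - 4) * (\<mu> - 4)"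
    using K11_plus_cubic_root[OF assms] .
  moreover have "4 < \<mu>" using assms \<open>n + 17/10 \<le> \<mu>\<close> by simp
  ultimately show ?thesis
    using assms eigenvalue_le_q_index K11_plus_eigenvalue[of n \<mu>] by fastforce
qed

lemma div_eq_iff_bounds:
  fixes m d q :: nat
  assumes "0 < d"
  shows "m div d = q \<longleftrightarrow> d * q \<le> m \<and> m < d * Suc q"
  using assms by (auto intro: div_nat_eqI simp: less_mult_imp_div_less dividend_less_times_div)

context
  fixes n k m :: nat and B :: "nat \<Rightarrow> nat \<Rightarrow> bool" and x :: "nat \<Rightarrow> real" and t :: real
  assumes n: "n = k + 4 * m" and "0 < k" and B: "\<And>i j. B i j \<Longrightarrow> i < k \<and> j < k"
    and x0: "x 0 = 1" and xt: "\<And>j. k \<le> j \<Longrightarrow> x j = t"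
begin

private lemma signless_mult_attach_K4_split:
  "signless_mult n (attach_K4 k m B) x i = (\<Sum>j<k. if attach_K4 k m B i j then x i + x j else 0)
     + (\<Sum>j\<in>{k..<n}. if attach_K4 k m B i j then x i + x j else 0)"
  unfolding signless_mult_def using n by (simp add: sum_lessThan_split)

private lemma sum_attach_K4_base:
  "i < k \<Longrightarrow> (\<Sum>j<k. if attach_K4 k m B i j then x i + x j else 0) = signless_mult k B x i"
  unfolding signless_mult_def using \<open>0 < k\<close> by (intro sum.cong) (auto simp: attach_K4_def)

lemma signless_mult_attach_K4_center:
  "signless_mult n (attach_K4 k m B) x 0 = signless_mult k B x 0 + 4 * real m * (1 + t)"
proof -
  have "(\<Sum>j\<in>{k..<n}. if attach_K4 k m B 0 j then x 0 + x j else 0) = (\<Sum>j\<in>{k..<n}. 1 + t)"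
    using n by (intro sum.cong) (auto simp: attach_K4_def x0 xt)
  then show ?thesis
    unfolding signless_mult_attach_K4_split sum_attach_K4_base[OF \<open>0 < k\<close>] using n by simp
qed

lemma signless_mult_attach_K4_base:
  assumes "0 < v" "v < k"
  shows "signless_mult n (attach_K4 k m B) x v = signless_mult k B x v"
proof -
  have "(\<Sum>j\<in>{k..<n}. if attach_K4 k m B v j then x v + x j else 0) = 0"
    using assms by (intro sum.neutral) (auto simp: attach_K4_def dest: B)
  then show ?thesis unfolding signless_mult_attach_K4_split sum_attach_K4_base[OF \<open>v < k\<close>] by simp
qed

lemma signless_mult_attach_K4_clique:
  assumes v: "k \<le> v" "v < n"
  shows "signless_mult n (attach_K4 k m B) x v = 1 + 7 * t"
proof -
  let ?G = "attach_K4 k m B"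
  define q where "q = (v - k) div 4"
  have "k + 4 * q + 4 \<le> n" using v n unfolding q_def by presburger
  have "(\<Sum>j<k. if ?G v j then x v + x j else 0) = (\<Sum>j<k. if j = 0 then 1 + t else 0)"
    using v n by (intro sum.cong) (auto simp: attach_K4_def xt x0 dest: B)
  also have "\<dots> = 1 + t" using \<open>0 < k\<close> by simp
  finally have center: "(\<Sum>j<k. if ?G v j then x v + x j else 0) = 1 + t" .
  have "?G v j \<longleftrightarrow> j \<in> {k + 4 * q..<k + 4 * q + 4} - {v}" if "k \<le> j" "j < n" for j
  proof -
    have "(j - k) div 4 = q \<longleftrightarrow> j \<in> {k + 4 * q..<k + 4 * q + 4}"
      using that by (auto simp: div_eq_iff_bounds)
    then show ?thesis using that v n \<open>0 < k\<close> B[of v j] unfolding attach_K4_def q_def by auto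
  qed
  then have "{j \<in> {k..<n}. ?G v j} = {k + 4 * q..<k + 4 * q + 4} - {v}"
    using \<open>k + 4 * q + 4 \<le> n\<close> by auto
  moreover have "v \<in> {k + 4 * q..<k + 4 * q + 4}" using v unfolding q_def by auto
  ultimately have card: "card {j \<in> {k..<n}. ?G v j} = 3" by simp
  have "(\<Sum>j\<in>{k..<n}. if ?G v j then x v + x j else 0) = (\<Sum>j\<in>{k..<n}. if ?G v j then 2 * t else 0)"
    using v by (intro sum.cong) (auto simp: xt)
  also have "\<dots> = (\<Sum>j\<in>{j \<in> {k..<n}. ?G v j}. 2 * t)" by (rule sum.inter_filter[symmetric]) simp
  also have "\<dots> = 3 * (2 * t)" using card by simp
  finally show ?thesis unfolding signless_mult_attach_K4_split center by simp
qed

end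

lemma twins_attach_K4:
  "twins B u v \<Longrightarrow> 0 < u \<Longrightarrow> u < k \<Longrightarrow> 0 < v \<Longrightarrow> v < k \<Longrightarrow> twins (attach_K4 k m B) u v"
  unfolding twins_def attach_K4_def by auto

text \<open>A weighting u of the base graph that, together with the weight t = 1/(n - 27/5) on the copies
  of K4, satisfies Q x \<le> (n + 8/5) x for every order n \<ge> N.\<close>
definition attach_K4_certificate :: "nat \<Rightarrow> real \<Rightarrow> (nat \<Rightarrow> nat \<Rightarrow> bool) \<Rightarrow> (nat \<Rightarrow> real) \<Rightarrow> bool" where
  "attach_K4_certificate k N B u \<longleftrightarrow> u 0 = 1 \<and> (\<forall>j<k. 0 < u j) \<and> signless_mult k B u 0 \<le> k + 3/5
     \<and> (\<forall>v<k. 0 < v \<longrightarrow> signless_mult k B u v \<le> (N + 8/5) * u v)"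

lemma attach_K4_eigenvalue_le:
  assumes n: "n = k + 4 * m" and k: "6 \<le> k" and B: "\<And>i j. B i j \<Longrightarrow> i < k \<and> j < k"
    and cert: "attach_K4_certificate k N B u" and "N \<le> n"
    and ev: "eigenvalue (signless_laplacian n (attach_K4 k m B)) \<mu>"
  shows "\<mu> \<le> n + 8/5"
proof (rule eigenvalue_le_if_signless_mult_le[OF _ _ ev])
  define t :: real where "t = 1 / (n - 27/5)"
  define x where "x j = (if j < k then u j else t)" for j
  have "t > 0" and t: "(n - 27/5) * t = 1" using n k by (simp_all add: t_def)
  have u0: "u 0 = 1" and upos: "\<And>j. j < k \<Longrightarrow> 0 < u j"
    and center: "signless_mult k B u 0 \<le> k + 3/5"
    and base: "\<And>v. 0 < v \<Longrightarrow> v < k \<Longrightarrow> signless_mult k B u v \<le> (N + 8/5) * u v"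
    using cert unfolding attach_K4_certificate_def by auto
  have "0 < k" "x 0 = 1" "\<And>j. k \<le> j \<Longrightarrow> x j = t" using k u0 by (simp_all add: x_def)
  note attach_assms = n this(1) B this(2,3)
  have restrict: "signless_mult k B x i = signless_mult k B u i" if "i < k" for i
    using that by (intro signless_mult_cong) (simp_all add: x_def)
  show "x i > 0" if "i < n" for i using upos \<open>t > 0\<close> by (simp add: x_def)
  fix i assume i: "i < n"
  consider "i = 0" | "0 < i" "i < k" | "k \<le> i" by linarith
  then show "signless_mult n (attach_K4 k m B) x i \<le> (n + 8/5) * x i"
  proof cases
    case 1
    txt \<open>As k \<ge> 6, the copies of K4 add at most (n - k)(1 + t) \<le> n - k + 1 to this row.\<close>
    have "4 * real m * t \<le> (n - 27/5) * t" using n k \<open>t > 0\<close> by (intro mult_right_mono) auto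
    then show ?thesis
      using 1 signless_mult_attach_K4_center[where B = B and x = x and t = t, OF attach_assms]
        restrict[OF \<open>0 < k\<close>] center n k t \<open>x 0 = 1\<close>
      by (simp add: algebra_simps)
  next
    case 2
    have "(N + 8/5) * u i \<le> (n + 8/5) * u i" using \<open>N \<le> n\<close> upos[OF 2(2)] by (intro mult_right_mono) auto
    then show ?thesis
      using 2 signless_mult_attach_K4_base[where B = B and x = x and t = t, OF attach_assms 2]
        restrict base[OF 2]
      by (simp add: x_def)
  next
    case 3
    have "1 + 7 * t = (n + 8/5) * t" using t by (simp add: algebra_simps)
    then show ?thesis
      using 3 i signless_mult_attach_K4_clique[where B = B and x = x and t = t, OF attach_assms]
      by (simp add: x_def)
  qed
qed

lemma attach_K4_q_index_le:
  assumes n: "n = k + 4 * m" and k: "6 \<le> k" and B: "\<And>i j. B i j \<Longrightarrow> i < k \<and> j < k"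
    and cert: "attach_K4_certificate k N B u" and "N \<le> n"
    and "twins B a b" "0 < a" "a < k" "0 < b" "b < k"
  shows "q_index n (attach_K4 k m B) \<le> n + 8/5"
proof -
  have "twins (attach_K4 k m B) a b" using assms by (intro twins_attach_K4)
  then obtain \<nu> where "eigenvalue (signless_laplacian n (attach_K4 k m B)) \<nu>"
    using twins_eigenvalue \<open>a < k\<close> \<open>b < k\<close> n by fastforce
  then show ?thesis
    using q_index_le attach_K4_eigenvalue_le[OF n k B cert \<open>N \<le> n\<close>] by blast
qed

lemma one_to_eleven_cases:
  "(i::nat) \<in> {1..11} \<Longrightarrow>
    i = 1 \<or> i = 2 \<or> i = 3 \<or> i = 4 \<or> i = 5 \<or> i = 6 \<or> i = 7 \<or> i = 8 \<or> i = 9 \<or> i = 10 \<or> i = 11"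
  by (simp only: atLeastAtMost_iff) presburger

definition U_weights :: "nat \<Rightarrow> real list" where
  "U_weights i = [
     [1, 1/5, 3/10, 3/10, 3/10, 3/10],
     [1, 1/10, 3/10, 3/10, 3/10, 3/10],
     [1, 11/20, 3/5, 3/5, 3/5, 3/5, 3/20],
     [1, 1/5, 3/5, 11/20, 3/5, 11/20, 3/20],
     [1, 1/5, 3/10, 3/10, 3/10, 3/10, 1/5, 1/5, 1/5],
     [1, 1/10, 3/10, 3/10, 3/10, 3/10, 1/5, 1/5, 1/5],
     [1, 1/5, 2/5, 2/5, 2/5, 3/10, 3/10, 3/10],
     [1, 1/10, 1/5, 1/5, 1/5, 3/20],
     [1, 1/10, 3/10, 1/5, 3/10, 3/10],
     [1, 27/100, 57/100, 37/100, 57/100, 39/50, 27/100],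
     [1, 1/5, 9/20, 3/10, 9/20, 3/4, 1/4, 1/4]] ! (i - 1)"

text \<open>The bound N is the least order n \<ge> 7 with n \<equiv> U_size i (mod 4).\<close>
lemma U_certificate:
  assumes "i \<in> {1..11}"
  shows "attach_K4_certificate (U_size i) (if U_size i = 6 then 10 else U_size i)
           (from_edges (U_edges i)) (\<lambda>j. U_weights i ! j)"
  using one_to_eleven_cases[OF assms]
  by (elim disjE) (simp_all add: attach_K4_certificate_def signless_mult_def U_weights_def U_size_def
      U_edges_def U1_edges_def U2_edges_def U7_edges_def U8_edges_def U9_edges_def from_edges_def
      lessThan_nat_numeral numeral_eq_Suc All_less_Suc)

lemma U_edges_bounded:
  assumes "i \<in> {1..11}" "from_edges (U_edges i) a b"
  shows "a < U_size i \<and> b < U_size i"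
  using one_to_eleven_cases[OF assms(1)] assms(2)
  by (elim disjE) (auto simp: U_size_def U_edges_def U1_edges_def U2_edges_def
      U7_edges_def U8_edges_def U9_edges_def from_edges_def)

lemma U_twins:
  assumes "i \<in> {1..11}"
  shows "twins (from_edges (U_edges i)) 2 (if i \<in> {7, 8} then 3 else 4)"
  using one_to_eleven_cases[OF assms]
  by (elim disjE) (auto simp: twins_def U_edges_def U1_edges_def U2_edges_def
      U7_edges_def U8_edges_def U9_edges_def from_edges_def)

lemma G_graph_q_index_le:
  assumes i: "i \<in> {1..11}" and "7 \<le> n" "U_size i \<le> n" "(n - U_size i) mod 4 = 0"
  shows "q_index n (G_graph i n) \<le> n + 8/5"
proof -
  define k where "k = U_size i"
  define m where "m = (n - k) div 4"
  have n: "n = k + 4 * m" using assms unfolding k_def m_def by presburger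
  have "6 \<le> k" unfolding k_def U_size_def by simp
  have "(if k = 6 then 10 else k) \<le> n" using n \<open>7 \<le> n\<close> by auto
  then show ?thesis
    unfolding G_graph_def m_def[symmetric] k_def[symmetric]
    using \<open>6 \<le> k\<close> U_twins[OF i]
    by (intro attach_K4_q_index_le[OF n \<open>6 \<le> k\<close> _ U_certificate[OF i, folded k_def]])
      (auto dest: U_edges_bounded[OF i] simp: k_def)
qed

lemma U12_certificate:
  assumes "3 \<le> s"
  shows "attach_K4_certificate (s + 3) (s + 7) (U12 s)
           (\<lambda>j. if j = 0 then 1 else if j \<le> 2 then 1/2 else 2 / s)"
proof -
  define u :: "nat \<Rightarrow> real" where "u j = (if j = 0 then 1 else if j \<le> 2 then 1/2 else 2 / s)" for j
  have "real s > 0" using assms by simp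
  have leaves: "(\<Sum>j\<in>{3..<s+3}. if U12 s i j then u i + u j else 0)
      = (if i < 3 then s * (u i + 2 / s) else 0)" for i
  proof (cases "i < 3")
    case True
    then have "(\<Sum>j\<in>{3..<s+3}. if U12 s i j then u i + u j else 0) = (\<Sum>j\<in>{3..<s+3}. u i + 2 / s)"
      by (intro sum.cong) (auto simp: U12_def u_def)
    then show ?thesis using True by simp
  qed (auto simp: U12_def intro: sum.neutral)
  have row: "signless_mult (s + 3) (U12 s) u i
      = (\<Sum>j<3. if U12 s i j then u i + u j else 0) + (if i < 3 then s * (u i + 2 / s) else 0)" for i
    unfolding signless_mult_def leaves[symmetric] by (rule sum_lessThan_split) simp
  have "signless_mult (s + 3) (U12 s) u v \<le> (real (s + 7) + 8/5) * u v" if "0 < v" "v < s + 3" for v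
  proof -
    consider "v = 1" | "v = 2" | "3 \<le> v" using \<open>0 < v\<close> by arith
    then show ?thesis
      by cases (use \<open>real s > 0\<close> in \<open>auto simp: row lessThan_nat_numeral U12_def u_def field_simps\<close>)
  qed
  moreover have "signless_mult (s + 3) (U12 s) u 0 \<le> real (s + 3) + 3/5"
    using \<open>real s > 0\<close> by (simp add: row lessThan_nat_numeral U12_def u_def field_simps)
  ultimately show ?thesis
    unfolding attach_K4_certificate_def u_def[symmetric] using \<open>real s > 0\<close> by (simp add: u_def)
qed

lemma G12_q_index_le:
  assumes "3 \<le> s" "s + 7 \<le> n" "(n - s - 3) mod 4 = 0"
  shows "q_index n (G12 n s) \<le> n + 8/5"
proof -
  define m where "m = (n - s - 3) div 4"
  have n: "n = (s + 3) + 4 * m" using assms unfolding m_def by presburger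
  have "twins (U12 s) 3 4" using assms(1) by (auto simp: twins_def U12_def)
  then show ?thesis
    unfolding G12_def m_def[symmetric] using assms
    by (intro attach_K4_q_index_le[OF n _ _ U12_certificate[OF assms(1)]]) (auto simp: U12_def)
qed

lemma G13_eigenvalue_le:
  assumes n: "7 \<le> n" and ev: "eigenvalue (signless_laplacian n (G13 n)) \<mu>"
  shows "\<mu> \<le> n + 8/5"
proof -
  define c :: real where "c = 13 / (5 * (real n - 3))"
  define x where "x j = (if j \<le> 1 then 1 else if j = 2 then 3/5 else c)" for j :: nat
  have "real n - 3 > 0" using n by simp
  then have "c > 0" and c: "(real n - 3) * c = 13/5" by (simp_all add: c_def field_simps)
  have large: "(\<Sum>j\<in>{3..<n}. if G13 n i j then x i + x j else 0)
      = (if i < 3 then (real n - 3) * (x i + c) else 0)" for i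
  proof (cases "i < 3")
    case True
    then have "(\<Sum>j\<in>{3..<n}. if G13 n i j then x i + x j else 0) = (\<Sum>j\<in>{3..<n}. x i + c)"
      by (intro sum.cong) (auto simp: G13_def x_def)
    then show ?thesis using True n by (simp add: of_nat_diff)
  qed (auto simp: G13_def intro: sum.neutral)
  have row: "signless_mult n (G13 n) x i
      = (\<Sum>j<3. if G13 n i j then x i + x j else 0) + (if i < 3 then (real n - 3) * (x i + c) else 0)" for i
    unfolding signless_mult_def large[symmetric] using n by (intro sum_lessThan_split) simp
  show ?thesis
  proof (rule eigenvalue_le_if_signless_mult_le[OF _ _ ev])
    show "x i > 0" for i using \<open>c > 0\<close> by (simp add: x_def)
    fix i assume "i < n"
    consider "i \<le> 1" | "i = 2" | "3 \<le> i" by linarith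
    then show "signless_mult n (G13 n) x i \<le> (n + 8/5) * x i"
    proof cases
      case 1
      then have "signless_mult n (G13 n) x i = 2 + (real n - 3) * 1 + (real n - 3) * c"
        by (auto simp: row lessThan_nat_numeral G13_def x_def distrib_left)
      then show ?thesis using 1 c by (simp add: x_def)
    next
      case 2
      then have "signless_mult n (G13 n) x i = (real n - 3) * (3/5) + 13/5"
        using c by (simp add: row lessThan_nat_numeral G13_def x_def distrib_left)
      then show ?thesis using 2 by (simp add: x_def field_simps)
    next
      case 3
      then have "signless_mult n (G13 n) x i = 13/5 + 3 * c"
        using \<open>i < n\<close> by (simp add: row lessThan_nat_numeral G13_def x_def)
      also have "\<dots> = real n * c" using c by (simp add: algebra_simps)
      finally show ?thesis using 3 \<open>c > 0\<close> by (simp add: x_def)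
    qed
  qed
qed

lemma G13_q_index_le:
  assumes "7 \<le> n"
  shows "q_index n (G13 n) \<le> n + 8/5"
proof -
  have "twins (G13 n) 3 4" using assms by (auto simp: twins_def G13_def)
  then obtain \<nu> where "eigenvalue (signless_laplacian n (G13 n)) \<nu>"
    using twins_eigenvalue assms by fastforce
  then show ?thesis using q_index_le G13_eigenvalue_le[OF assms] by blast
qed

lemma q_index_less_K11_plus:
  "7 \<le> n \<Longrightarrow> q_index n E \<le> n + 8/5 \<Longrightarrow> q_index n E < q_index n (K11_plus n)"
  using K11_plus_q_index_ge[of n] by linarith

theorem lemma2p9:
  shows "(\<forall>i \<in> {1..11}. \<forall>n. 7 \<le> n \<and> U_size i \<le> n \<and> (n - U_size i) mod 4 = 0 \<longrightarrow>
            q_index n (G_graph i n) < q_index n (K11_plus n))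
       \<and> (\<forall>n s. 3 \<le> s \<and> s + 7 \<le> n \<and> (n - s - 3) mod 4 = 0 \<longrightarrow>
            q_index n (G12 n s) < q_index n (K11_plus n))
       \<and> (\<forall>n. 7 \<le> n \<longrightarrow> q_index n (G13 n) < q_index n (K11_plus n))"
  by (auto intro!: q_index_less_K11_plus G_graph_q_index_le G12_q_index_le G13_q_index_le)

end
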